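(* For every context $\Theta$, if $\mathrm{fr}(\Theta)=\Omega$ then $\Omega\le\Theta$ in the substitution order, where $\Omega$ is regarded as a context consisting of atomic formulas.
   Context: Formulas are built from atoms ($p,q,\dots$) by a binary product: every formula is an atom or $A\bullet B$. A context is a finite (possibly empty) list of formulas; commas denote concatenation. The frontier $\mathrm{fr}$ is the ordered list of atom occurrences: $\mathrm{fr}(p)=p$, $\mathrm{fr}(A\bullet B)=\mathrm{fr}(A),\mathrm{fr}(B)$, and for a context the concatenation of the frontiers of its formulas. The sequent calculus has exactly four rules (no weakening, contraction or exchange): ($\bullet L$) from $A,B,\Delta\vdash C$ infer $A\bullet B,\Delta\vdash C$ (the product must be leftmost); ($\bullet R$) from $\Gamma\vdash A$ and $\Delta\vdash B$ infer $\Gamma,\Delta\vdash A\bullet B$; ($id$) $A\vdash A$; ($cut$) from $\Theta\vdash A$ and $\Gamma,A,\Delta\vdash B$ infer $\Gamma,\Theta,\Delta\vdash B$; derivable means conclusion of a finite derivation tree with no undischarged premises. The substitution order on contexts is the least relation $\le$ such that (1) $\Gamma\vdash A$ derivable implies $\Gamma\le A$ (one-element context); (2) $\cdot\le\cdot$ for the empty context; (3) $\Gamma_1\le\Gamma_2$ and $\Theta_1\le\Theta_2$ imply $(\Gamma_1,\Theta_1)\le(\Gamma_2,\Theta_2)$. *)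

theory Defs
  imports Main
begin

datatype 'a fm = Atom 'a | Prod "'a fm" "'a fm"

type_synonym 'a ctx = "'a fm list"

inductive derivable :: "'a ctx \<Rightarrow> 'a fm \<Rightarrow> bool" where
  prodL: "derivable (A # B # \<Delta>) C \<Longrightarrow> derivable (Prod A B # \<Delta>) C"
| prodR: "derivable \<Gamma> A \<Longrightarrow> derivable \<Delta> B \<Longrightarrow> derivable (\<Gamma> @ \<Delta>) (Prod A B)"
| ident: "derivable [A] A"
| cut: "derivable \<Theta> A \<Longrightarrow> derivable (\<Gamma> @ [A] @ \<Delta>) B \<Longrightarrow> derivable (\<Gamma> @ \<Theta> @ \<Delta>) B"

fun fr :: "'a fm \<Rightarrow> 'a list" where
  "fr (Atom p) = [p]"
| "fr (Prod A B) = fr A @ fr B"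

definition fr_ctx :: "'a ctx \<Rightarrow> 'a list" where
  "fr_ctx \<Gamma> = concat (map fr \<Gamma>)"

inductive subst_le :: "'a ctx \<Rightarrow> 'a ctx \<Rightarrow> bool" where
  sl_der: "derivable \<Gamma> A \<Longrightarrow> subst_le \<Gamma> [A]"
| sl_empty: "subst_le [] []"
| sl_app: "subst_le \<Gamma>1 \<Gamma>2 \<Longrightarrow> subst_le \<Theta>1 \<Theta>2 \<Longrightarrow> subst_le (\<Gamma>1 @ \<Theta>1) (\<Gamma>2 @ \<Theta>2)"

end

theory Submission
  imports Defs
begin

lemma derivable_frontier: "derivable (map Atom (fr A)) A"
proof (induction A)
  case (Atom p)
  show ?case by (simp add: ident)
next
  case (Prod A B)
  then show ?case using prodR[of _ A _ B] by fastforce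
qed

lemma subst_le_frontier: "subst_le (map Atom (fr_ctx \<Theta>)) \<Theta>"
proof (induction \<Theta>)
  case Nil
  show ?case by (simp add: fr_ctx_def sl_empty)
next
  case (Cons A \<Theta>)
  have "subst_le (map Atom (fr A) @ map Atom (fr_ctx \<Theta>)) ([A] @ \<Theta>)"
    by (rule sl_app[OF sl_der[OF derivable_frontier] Cons])
  then show ?case by (simp add: fr_ctx_def)
qed

theorem proposition2p11:
  fixes \<Theta> :: "'a ctx" and \<Omega> :: "'a list"
  assumes "fr_ctx \<Theta> = \<Omega>"
  shows "subst_le (map Atom \<Omega>) \<Theta>"
  using subst_le_frontier assms by blast

end
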